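(* Let $D$ be an integral domain with field of fractions $K$ and let $A$ be a $D$-algebra with standard assumptions. Assume that $A$ is an integral $D$-algebra of bounded degree $n$, i.e. every $a\in A$ satisfies $\mu_a(a)=0$ for some monic $\mu_a\in D[X]$ of degree $n$. Then $\textnormal{Int}_K(M_n(D)) \subseteq \textnormal{Int}_K(A)$, where $M_n(D)$ is the $D$-algebra of $n\times n$ matrices over $D$.
   Context: A $D$-algebra $A$ (not necessarily commutative) satisfies the standard assumptions if it is torsion-free as a $D$-module and $A\cap K = D$, where $A$ and $K$ are identified with their images in $B=K\otimes_D A$ via $a\mapsto 1\otimes a$ and $k\mapsto k\otimes 1$. Polynomials in $K[X]$ are evaluated at elements of $A$ inside $B$. $\textnormal{Int}_K(A)=\{f\in K[X]\mid f(A)\subseteq A\}$. An integral algebra of bounded degree $n$ is one in which each element satisfies a monic polynomial with coefficients in $D$ of degree at most $n$ (equivalently, after multiplying by a power of $X$, of degree exactly $n$). *)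

theory Defs
  imports "HOL-Computational_Algebra.Polynomial" "Jordan_Normal_Form.Matrix"
begin

text \<open>Evaluation of a polynomial with coefficients in K at an element of a ring B,
  where K acts on B through the (central) ring homomorphism phi.\<close>
definition peval :: "('k::comm_ring_1 \<Rightarrow> 'b::ring_1) \<Rightarrow> 'k poly \<Rightarrow> 'b \<Rightarrow> 'b" where
  "peval phi f b = (\<Sum>i\<le>degree f. phi (coeff f i) * b ^ i)"

definition IntK :: "('k::comm_ring_1 \<Rightarrow> 'b::ring_1) \<Rightarrow> 'b set \<Rightarrow> 'k poly set" where
  "IntK phi A = {f. \<forall>a\<in>A. peval phi f a \<in> A}"

definition mat_peval :: "nat \<Rightarrow> 'k::comm_ring_1 poly \<Rightarrow> 'k mat \<Rightarrow> 'k mat" where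
  "mat_peval n f M = foldr (\<lambda>c acc. c \<cdot>\<^sub>m 1\<^sub>m n + M * acc) (coeffs f) (0\<^sub>m n n)"

definition Mn :: "'k set \<Rightarrow> nat \<Rightarrow> 'k mat set" where
  "Mn D n = {M \<in> carrier_mat n n. \<forall>i<n. \<forall>j<n. M $$ (i, j) \<in> D}"

definition IntK_mat :: "'k::comm_ring_1 set \<Rightarrow> nat \<Rightarrow> 'k poly set" where
  "IntK_mat D n = {f. \<forall>M\<in>Mn D n. mat_peval n f M \<in> Mn D n}"

definition is_fraction_field_of :: "'k::field set \<Rightarrow> bool" where
  "is_fraction_field_of D \<longleftrightarrow>
     0 \<in> D \<and> 1 \<in> D \<and> (\<forall>x\<in>D. \<forall>y\<in>D. x + y \<in> D \<and> x - y \<in> D \<and> x * y \<in> D) \<and>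
     (\<forall>k. \<exists>x\<in>D. \<exists>y\<in>D. y \<noteq> 0 \<and> k = x / y)"

definition is_subring :: "'b::ring_1 set \<Rightarrow> bool" where
  "is_subring A \<longleftrightarrow> 0 \<in> A \<and> 1 \<in> A \<and> (\<forall>x\<in>A. \<forall>y\<in>A. x + y \<in> A \<and> x - y \<in> A \<and> x * y \<in> A)"

text \<open>phi : K -> B is a ring homomorphism with central image (B is a K-algebra).\<close>
definition central_hom :: "('k::field \<Rightarrow> 'b::ring_1) \<Rightarrow> bool" where
  "central_hom phi \<longleftrightarrow> phi 1 = 1 \<and> (\<forall>x y. phi (x + y) = phi x + phi y) \<and>
     (\<forall>x y. phi (x * y) = phi x * phi y) \<and> (\<forall>k b. phi k * b = b * phi k)"

definition monic_over :: "'k::comm_ring_1 set \<Rightarrow> 'k poly \<Rightarrow> bool" where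
  "monic_over D p \<longleftrightarrow> lead_coeff p = 1 \<and> (\<forall>i. coeff p i \<in> D)"

end

theory Submission
  imports Defs
begin

text \<open>
  Let \<open>\<mu>\<close> be the monic integral equation of degree \<open>n\<close> of \<open>a \<in> A\<close> and \<open>C\<close> its companion
  matrix, which lies in \<open>M\<^sub>n(D)\<close>. For every \<open>f \<in> K[X]\<close> the first column of \<open>f(C)\<close> lists the
  coefficients of \<open>f mod \<mu>\<close>; so if \<open>f \<in> Int\<^sub>K(M\<^sub>n(D))\<close> then \<open>f mod \<mu> \<in> D[X]\<close>, and
  \<open>f(a) = (f mod \<mu>)(a) \<in> A\<close>.
\<close>

lemma central_hom_zero: "central_hom phi \<Longrightarrow> phi 0 = 0"
  unfolding central_hom_def by (metis add_cancel_right_right add_0)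

lemma central_hom_add: "central_hom phi \<Longrightarrow> phi (x + y) = phi x + phi y"
  and central_hom_mult: "central_hom phi \<Longrightarrow> phi (x * y) = phi x * phi y"
  and central_hom_commute: "central_hom phi \<Longrightarrow> phi k * b = b * phi k"
  unfolding central_hom_def by blast+

lemma peval_eq_sum_atMost:
  assumes hom: "central_hom phi" and "degree f \<le> N"
  shows "peval phi f b = (\<Sum>i\<le>N. phi (coeff f i) * b ^ i)"
  unfolding peval_def using assms
  by (intro sum.mono_neutral_left) (auto simp: coeff_eq_0 central_hom_zero)

lemma peval_0: "peval phi 0 b = phi 0"
  by (simp add: peval_def)

lemma peval_add:
  assumes hom: "central_hom phi"
  shows "peval phi (f + g) b = peval phi f b + peval phi g b"
proof -
  let ?N = "max (degree f) (degree g)"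
  have "degree (f + g) \<le> ?N" by (rule degree_add_le) auto
  then show ?thesis
    by (simp add: peval_eq_sum_atMost[OF hom, of _ ?N] central_hom_add[OF hom]
        sum.distrib distrib_right)
qed

lemma peval_smult:
  assumes hom: "central_hom phi"
  shows "peval phi (Polynomial.smult c f) b = phi c * peval phi f b"
  by (simp add: peval_eq_sum_atMost[OF hom, of _ "degree f"] central_hom_mult[OF hom]
      sum_distrib_left mult.assoc)

lemma peval_pCons:
  assumes hom: "central_hom phi"
  shows "peval phi (pCons c p) b = phi c + b * peval phi p b"
proof -
  have "peval phi (pCons c p) b = phi c + (\<Sum>i\<le>degree p. phi (coeff p i) * b ^ Suc i)"
    by (simp add: peval_eq_sum_atMost[OF hom, of _ "Suc (degree p)"] sum.atMost_Suc_shift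
        del: sum.atMost_Suc)
  also have "(\<Sum>i\<le>degree p. phi (coeff p i) * b ^ Suc i) = b * peval phi p b"
    by (simp add: peval_def sum_distrib_left mult.assoc central_hom_commute[OF hom, of _ b]
        flip: mult.assoc)
  finally show ?thesis .
qed

lemma peval_mult:
  assumes hom: "central_hom phi"
  shows "peval phi (p * q) b = peval phi p b * peval phi q b"
proof (induction p)
  case 0
  show ?case by (simp add: peval_0 central_hom_zero[OF hom])
next
  case (pCons c p)
  have "peval phi (pCons 0 r) b = b * peval phi r b" for r
    by (simp add: peval_pCons[OF hom] central_hom_zero[OF hom])
  then show ?case
    by (simp add: peval_add[OF hom] peval_smult[OF hom] peval_pCons[OF hom] pCons.IH
        distrib_right mult.assoc)
qed

lemma peval_mod:
  assumes hom: "central_hom phi" and "peval phi m b = 0"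
  shows "peval phi f b = peval phi (f mod m) b"
proof -
  have "peval phi f b = peval phi (f div m * m) b + peval phi (f mod m) b"
    by (metis div_mult_mod_eq peval_add[OF hom])
  then show ?thesis using assms by (simp add: peval_mult)
qed

lemma subring_power: "is_subring A \<Longrightarrow> a \<in> A \<Longrightarrow> a ^ i \<in> A"
  by (induction i) (auto simp: is_subring_def)

lemma subring_sum:
  assumes "is_subring A" "finite S" "\<And>i. i \<in> S \<Longrightarrow> g i \<in> A"
  shows "sum g S \<in> A"
  using assms(2,3) by (induction S rule: finite_induct) (use assms(1) in \<open>auto simp: is_subring_def\<close>)

lemma peval_in_subring:
  assumes A: "is_subring A" and alg: "phi ` D \<subseteq> A"
    and coeffs_D: "\<And>i. coeff f i \<in> D" and a: "a \<in> A"
  shows "peval phi f a \<in> A"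
  unfolding peval_def
proof (rule subring_sum[OF A])
  fix i
  have "phi (coeff f i) \<in> A" using alg coeffs_D by blast
  with subring_power[OF A a] show "phi (coeff f i) * a ^ i \<in> A"
    using A by (auto simp: is_subring_def)
qed simp

lemma mat_peval_carrier:
  assumes "M \<in> carrier_mat n n" shows "mat_peval n f M \<in> carrier_mat n n"
proof -
  have "foldr (\<lambda>c acc. c \<cdot>\<^sub>m 1\<^sub>m n + M * acc) cs (0\<^sub>m n n) \<in> carrier_mat n n" for cs
    using assms by (induction cs) auto
  then show ?thesis unfolding mat_peval_def .
qed

lemma mat_peval_0: "mat_peval n 0 M = 0\<^sub>m n n"
  by (simp add: mat_peval_def)

lemma mat_peval_pCons:
  assumes M: "M \<in> carrier_mat n n"
  shows "mat_peval n (pCons c f) M = c \<cdot>\<^sub>m 1\<^sub>m n + M * mat_peval n f M"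
proof (cases "f = 0 \<and> c = 0")
  case True
  have "0 \<cdot>\<^sub>m 1\<^sub>m n + M * 0\<^sub>m n n = 0\<^sub>m n n"
    using M by (intro eq_matI) auto
  with True show ?thesis by (simp add: mat_peval_def)
next
  case False
  then have "coeffs (pCons c f) = c # coeffs f" by (auto simp: cCons_def)
  then show ?thesis by (simp add: mat_peval_def)
qed

definition companion_mat :: "nat \<Rightarrow> 'k::comm_ring_1 poly \<Rightarrow> 'k mat" where
  "companion_mat n m = mat n n (\<lambda>(i, j).
     (if i = Suc j then 1 else 0) - (if j = n - 1 then coeff m i else 0))"

lemma companion_mat_carrier: "companion_mat n m \<in> carrier_mat n n"
  by (simp add: companion_mat_def)

lemma companion_mat_Mn:
  assumes D: "is_fraction_field_of D" and "\<And>i. coeff m i \<in> D"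
  shows "companion_mat n m \<in> Mn D n"
  using assms unfolding Mn_def companion_mat_def is_fraction_field_of_def by auto

lemma companion_mat_mult_col0:
  assumes P: "P \<in> carrier_mat n n" and i: "i < n"
  shows "(companion_mat n m * P) $$ (i, 0) =
    (if i = 0 then 0 else P $$ (i - 1, 0)) - coeff m i * P $$ (n - 1, 0)"
proof -
  have "(companion_mat n m * P) $$ (i, 0) = (\<Sum>j<n. companion_mat n m $$ (i, j) * P $$ (j, 0))"
    using P i by (simp add: companion_mat_def scalar_prod_def atLeast0LessThan)
  also have "\<dots> = (\<Sum>j<n. if i = Suc j then P $$ (j, 0) else 0)
    - (\<Sum>j<n. if j = n - 1 then coeff m i * P $$ (j, 0) else 0)"
    using i by (subst sum_subtractf[symmetric], intro sum.cong)
      (auto simp: companion_mat_def left_diff_distrib)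
  finally have "(companion_mat n m * P) $$ (i, 0) = \<dots>" .
  moreover have "(\<Sum>j<n. if i = Suc j then P $$ (j, 0) else 0) =
      (if i = 0 then 0 else P $$ (i - 1, 0))"
    using i by (cases i) (auto simp: sum.delta'[of _ _ "\<lambda>j. P $$ (j, 0)", simplified eq_commute])
  ultimately show ?thesis using i by (simp add: sum.delta')
qed

text \<open>One step of reduction modulo a monic \<open>m\<close> of degree \<open>n\<close>: multiplying by \<open>X\<close> and adding
  \<open>c\<close> only overflows into degree \<open>n\<close> with the top coefficient of the previous remainder.\<close>
lemma pCons_mod_monic:
  fixes m :: "'k::field poly"
  assumes m1: "lead_coeff m = 1" and dm: "degree m = n" and n: "0 < n"
  shows "pCons c f mod m = pCons c (f mod m) - Polynomial.smult (coeff (f mod m) (n - 1)) m"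
proof -
  define d where "d = coeff (f mod m) (n - 1)"
  define r where "r = pCons c (f mod m) - Polynomial.smult d m"
  have m0: "m \<noteq> 0" using m1 by auto
  have deg_mod: "degree (f mod m) < n"
    using degree_mod_less[OF m0, of f] dm n by auto
  have "degree r \<le> n - 1"
  proof (rule degree_le, intro allI impI)
    fix k assume k: "n - 1 < k"
    then obtain k' where k': "k = Suc k'" by (cases k) auto
    show "coeff r k = 0"
    proof (cases "k = n")
      case True
      with k' m1 dm show ?thesis by (auto simp: r_def d_def)
    next
      case False
      with k k' deg_mod dm show ?thesis by (simp add: r_def coeff_eq_0)
    qed
  qed
  with n dm have "degree r < degree m" by simp
  moreover have "pCons c f = r + (pCons 0 (f div m) + [:d:]) * m"
  proof -
    have "pCons c f = pCons c (f div m * m + f mod m)" by simp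
    then show ?thesis by (simp add: r_def algebra_simps)
  qed
  ultimately have "pCons c f mod m = r"
    by (metis mod_mult_self1 mod_poly_less)
  then show ?thesis by (simp add: r_def d_def)
qed

lemma mat_peval_companion_col0:
  fixes m :: "'k::field poly"
  assumes m1: "lead_coeff m = 1" and dm: "degree m = n" and i: "i < n"
  shows "mat_peval n f (companion_mat n m) $$ (i, 0) = coeff (f mod m) i"
  using i
proof (induction f arbitrary: i)
  case 0
  then show ?case by (simp add: mat_peval_0)
next
  case (pCons c f)
  let ?P = "mat_peval n f (companion_mat n m)"
  have P: "?P \<in> carrier_mat n n" by (rule mat_peval_carrier[OF companion_mat_carrier])
  have n: "0 < n" using pCons.prems by simp
  have "mat_peval n (pCons c f) (companion_mat n m) $$ (i, 0) =
      (if i = 0 then c else 0) + (companion_mat n m * ?P) $$ (i, 0)"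
    using carrier_matD[OF mult_carrier_mat[OF companion_mat_carrier P]] pCons.prems n
    by (simp add: mat_peval_pCons[OF companion_mat_carrier] del: index_mult_mat)
  also have "\<dots> = (if i = 0 then c else 0) + ((if i = 0 then 0 else ?P $$ (i - 1, 0))
        - coeff m i * ?P $$ (n - 1, 0))"
    by (simp only: companion_mat_mult_col0[OF P pCons.prems])
  also have "\<dots> = coeff (pCons c f mod m) i"
    using pCons.IH pCons.prems n
    by (cases i) (auto simp: pCons_mod_monic[OF m1 dm n] mult.commute)
  finally show ?case .
qed

lemma IntK_mat_mod_monic_coeff:
  assumes D: "is_fraction_field_of D" and f: "f \<in> IntK_mat D n"
    and m: "monic_over D m" and dm: "degree m = n"
  shows "coeff (f mod m) i \<in> D"
proof (cases "i < n")
  case True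
  have m1: "lead_coeff m = 1" and mD: "\<And>i. coeff m i \<in> D"
    using m by (auto simp: monic_over_def)
  have "mat_peval n f (companion_mat n m) \<in> Mn D n"
    using f companion_mat_Mn[OF D mD] by (auto simp: IntK_mat_def)
  with True have "mat_peval n f (companion_mat n m) $$ (i, 0) \<in> D"
    by (auto simp: Mn_def)
  with True show ?thesis by (simp add: mat_peval_companion_col0[OF m1 dm])
next
  case False
  have "m \<noteq> 0" using m by (auto simp: monic_over_def)
  then have "f mod m = 0 \<or> degree (f mod m) < n"
    using degree_mod_less[of m f] dm by auto
  with False D show ?thesis by (auto simp: coeff_eq_0 is_fraction_field_of_def)
qed

theorem mainTheorem1:
  fixes D :: "'k::field set" and phi :: "'k \<Rightarrow> 'b::ring_1" and A :: "'b set" and n :: nat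
  assumes frac: "is_fraction_field_of D"
    and hom: "central_hom phi"
    and subA: "is_subring A"
    and alg: "phi ` D \<subseteq> A"
    and tensor: "\<forall>b. \<exists>k a. a \<in> A \<and> b = phi k * a"
    and std: "A \<inter> range phi = phi ` D"
    and integral: "\<forall>a\<in>A. \<exists>\<mu>. monic_over D \<mu> \<and> degree \<mu> = n \<and> peval phi \<mu> a = 0"
  shows "IntK_mat D n \<subseteq> IntK phi A"
  unfolding IntK_def
proof (intro subsetI CollectI ballI)
  fix f a assume f: "f \<in> IntK_mat D n" and a: "a \<in> A"
  obtain \<mu> where \<mu>: "monic_over D \<mu>" "degree \<mu> = n" and \<mu>a: "peval phi \<mu> a = 0"
    using integral a by blast
  have "peval phi f a = peval phi (f mod \<mu>) a" by (rule peval_mod[OF hom \<mu>a])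
  also have "\<dots> \<in> A"
    using IntK_mat_mod_monic_coeff[OF frac f \<mu>] by (rule peval_in_subring[OF subA alg _ a])
  finally show "peval phi f a \<in> A" .
qed

end
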